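(* Let $(X,d)$ be a metric space and $\Phi'_n,\Phi''_n:X\to X$, $n\in\mathbb{N}$, maps such that for constants $K>0$, $\theta<1$: $\mathrm{diam}(X)\le K$ and for all $n$ and $x_1,x_2\in X$, $d(\Phi'_n(x_1),\Phi'_n(x_2))\le\theta d(x_1,x_2)$ and $d(\Phi''_n(x_1),\Phi''_n(x_2))\le\theta d(x_1,x_2)$. Suppose there are constants $C>0$, $\kappa>0$ such that $d(\Phi'_n(x),\Phi''_n(x))\le C/n^\kappa$ for all $x\in X$ and $n\in\mathbb{N}$. Then there is a constant $\bar C$ such that for all $x',x''\in X$ and $n\in\mathbb{N}$, $$d\big(\Phi'_n\circ\cdots\circ\Phi'_1(x'),\ \Phi''_n\circ\cdots\circ\Phi''_1(x'')\big)\le\frac{\bar C}{n^\kappa}.$$ *)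

theory Defs
  imports "HOL-Analysis.Analysis"
begin

fun comp_seq :: "(nat \<Rightarrow> 'a \<Rightarrow> 'a) \<Rightarrow> nat \<Rightarrow> 'a \<Rightarrow> 'a" where
  "comp_seq Phi 0 x = x"
| "comp_seq Phi (Suc n) x = Phi (Suc n) (comp_seq Phi n x)"

end

theory Submission
  imports Defs "HOL-Real_Asymp.Real_Asymp"
begin

text \<open>Let d n be the distance between the n-th iterates. Applying the contraction to
  Phi1 and then passing to Phi2 gives d (n+1) \<le> \<theta> d n + C / (n+1)^\<kappa>. Fix 1 < s < 1/\<theta>.
  As ((n+1)/n)^\<kappa> \<rightarrow> 1, the bound d n \<le> B / n^\<kappa> propagates from n to n+1 beyond some N
  whenever \<theta> s B + C \<le> B, and the finitely many earlier terms are at most diam X \<le> K.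
  The resulting B depends only on K, C, \<theta>, \<kappa>, not on the starting points.\<close>

lemma eventually_Suc_powr_le_mult:
  fixes \<kappa> s :: real
  assumes "s > 1"
  shows "eventually (\<lambda>n. real (Suc n) powr \<kappa> \<le> s * real n powr \<kappa>) sequentially"
proof -
  have "((\<lambda>n. (real (Suc n) / real n) powr \<kappa>) \<longlongrightarrow> 1) sequentially"
    by real_asymp
  then have "eventually (\<lambda>n. (real (Suc n) / real n) powr \<kappa> < s) sequentially"
    using assms by (simp add: order_tendstoD(2))
  with eventually_gt_at_top[of 0] show ?thesis
  proof eventually_elim
    case (elim n)
    then have "real (Suc n) powr \<kappa> / real n powr \<kappa> < s"
      by (simp add: powr_divide)
    then show ?case
      using elim(1) by (simp add: divide_less_eq)
  qed
qed

lemma dist_perturbed_contraction_le: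
  assumes "\<And>x y. dist (f x) (f y) \<le> t * dist x y"
    and "\<And>x. dist (f x) (g x) \<le> e"
  shows "dist (f u) (g v) \<le> t * dist u v + e"
proof -
  have "dist (f u) (g v) \<le> dist (f u) (f v) + dist (f v) (g v)"
    by (rule dist_triangle)
  also have "\<dots> \<le> t * dist u v + e"
    using assms by (rule add_mono)
  finally show ?thesis .
qed

lemma powr_decay_propagates:
  fixes d :: "nat \<Rightarrow> real"
  assumes "0 \<le> t" "0 \<le> B" "1 \<le> N"
    and growth: "\<And>n. N \<le> n \<Longrightarrow> real (Suc n) powr \<kappa> \<le> s * real n powr \<kappa>"
    and absorb: "t * s * B + C \<le> B"
    and step_le: "\<And>n. N \<le> n \<Longrightarrow> d (Suc n) \<le> t * d n + C / real (Suc n) powr \<kappa>"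
    and start: "d N \<le> B / real N powr \<kappa>"
    and "N \<le> n"
  shows "d n \<le> B / real n powr \<kappa>"
  using \<open>N \<le> n\<close>
proof (induction n rule: dec_induct)
  case base
  show ?case by (rule start)
next
  case (step n)
  have pos: "real n powr \<kappa> > 0" "real (Suc n) powr \<kappa> > 0"
    using step.hyps \<open>1 \<le> N\<close> by auto
  have "B * real (Suc n) powr \<kappa> \<le> s * B * real n powr \<kappa>"
    using mult_left_mono[OF growth[OF step.hyps(1)] \<open>0 \<le> B\<close>] by (simp add: ac_simps)
  then have shift: "B / real n powr \<kappa> \<le> s * B / real (Suc n) powr \<kappa>"
    using pos by (simp add: field_simps)
  have "d (Suc n) \<le> t * d n + C / real (Suc n) powr \<kappa>"
    using step_le step.hyps by simp
  also have "\<dots> \<le> t * (s * B / real (Suc n) powr \<kappa>) + C / real (Suc n) powr \<kappa>"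
    using mult_left_mono[OF order_trans[OF step.IH shift] \<open>0 \<le> t\<close>] by simp
  also have "\<dots> = (t * s * B + C) / real (Suc n) powr \<kappa>"
    by (simp add: field_simps)
  also have "\<dots> \<le> B / real (Suc n) powr \<kappa>"
    using absorb pos by (simp add: divide_right_mono)
  finally show ?case .
qed

lemma perturbed_contraction_powr_decay:
  fixes t K C \<kappa> :: real
  assumes "0 \<le> t" "t < 1" "0 \<le> \<kappa>"
  shows "\<exists>B. \<forall>d :: nat \<Rightarrow> real. (\<forall>n. d n \<le> K) \<longrightarrow>
           (\<forall>n \<ge> 1. d (Suc n) \<le> t * d n + C / real (Suc n) powr \<kappa>) \<longrightarrow>
           (\<forall>n \<ge> 1. d n \<le> B / real n powr \<kappa>)"
proof -
  define s where "s = 2 / (1 + t)"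
  have "s > 1" and ts: "t * s < 1"
    using assms(1,2) by (auto simp: s_def field_simps)
  then obtain N0 where N0: "\<And>n. n \<ge> N0 \<Longrightarrow> real (Suc n) powr \<kappa> \<le> s * real n powr \<kappa>"
    using eventually_Suc_powr_le_mult[of s \<kappa>] by (auto simp: eventually_sequentially)
  define N where "N = Suc N0"
  have N: "1 \<le> N" "\<And>n. N \<le> n \<Longrightarrow> real (Suc n) powr \<kappa> \<le> s * real n powr \<kappa>"
    using N0 by (auto simp: N_def)
  define B where "B = max (max 0 K * real N powr \<kappa>) (C / (1 - t * s))"
  have BK: "max 0 K * real N powr \<kappa> \<le> B" and BC: "C / (1 - t * s) \<le> B"
    by (auto simp: B_def)
  have "0 \<le> max 0 K * real N powr \<kappa>"
    by simp
  with BK have "0 \<le> B"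
    by linarith
  from BC have "C \<le> (1 - t * s) * B"
    using ts by (simp add: pos_divide_le_eq mult.commute)
  then have absorb: "t * s * B + C \<le> B"
    by (simp add: algebra_simps)
  have "d n \<le> B / real n powr \<kappa>"
    if bounded: "\<forall>n. d n \<le> K"
      and step_le: "\<forall>n \<ge> 1. d (Suc n) \<le> t * d n + C / real (Suc n) powr \<kappa>"
      and "1 \<le> n" for d n
  proof -
    have initial: "d m \<le> B / real m powr \<kappa>" if "1 \<le> m" "m \<le> N" for m
    proof -
      have "K * real m powr \<kappa> \<le> max 0 K * real m powr \<kappa>"
        by (simp add: mult_right_mono)
      also have "\<dots> \<le> max 0 K * real N powr \<kappa>"
        using that assms(3) by (intro mult_left_mono powr_mono2) auto
      finally have "K \<le> B / real m powr \<kappa>"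
        using BK that by (simp add: pos_le_divide_eq)
      with bounded[rule_format] show ?thesis by (rule order_trans)
    qed
    show ?thesis
    proof (cases "n \<le> N")
      case True
      with initial \<open>1 \<le> n\<close> show ?thesis by blast
    next
      case False
      show ?thesis
      proof (rule powr_decay_propagates[OF assms(1) \<open>0 \<le> B\<close> N absorb])
        show "d (Suc m) \<le> t * d m + C / real (Suc m) powr \<kappa>" if "N \<le> m" for m
          using step_le N(1) that by simp
        show "d N \<le> B / real N powr \<kappa>"
          using initial N(1) by simp
        show "N \<le> n"
          using False by simp
      qed
    qed
  qed
  then show ?thesis by blast
qed

theorem propositionC3:
  fixes Phi1 Phi2 :: "nat \<Rightarrow> 'a::metric_space \<Rightarrow> 'a"
    and K \<theta> C \<kappa> :: real
  assumes "K > 0" and "\<theta> < 1"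
    and diam: "\<forall>x y :: 'a. dist x y \<le> K"
    and contr1: "\<forall>n \<ge> 1. \<forall>x1 x2. dist (Phi1 n x1) (Phi1 n x2) \<le> \<theta> * dist x1 x2"
    and contr2: "\<forall>n \<ge> 1. \<forall>x1 x2. dist (Phi2 n x1) (Phi2 n x2) \<le> \<theta> * dist x1 x2"
    and "C > 0" and "\<kappa> > 0"
    and close: "\<forall>n \<ge> 1. \<forall>x. dist (Phi1 n x) (Phi2 n x) \<le> C / real n powr \<kappa>"
  shows "\<exists>Cbar. \<forall>x' x''. \<forall>n \<ge> 1.
           dist (comp_seq Phi1 n x') (comp_seq Phi2 n x'') \<le> Cbar / real n powr \<kappa>"
proof -
  define t where "t = max \<theta> 0"
  have "0 \<le> t" "t < 1" "0 \<le> \<kappa>"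
    using \<open>\<theta> < 1\<close> \<open>\<kappa> > 0\<close> by (auto simp: t_def)
  then obtain B where B: "\<forall>d :: nat \<Rightarrow> real. (\<forall>n. d n \<le> K) \<longrightarrow>
      (\<forall>n \<ge> 1. d (Suc n) \<le> t * d n + C / real (Suc n) powr \<kappa>) \<longrightarrow>
      (\<forall>n \<ge> 1. d n \<le> B / real n powr \<kappa>)"
    using perturbed_contraction_powr_decay by blast
  have Lipschitz: "dist (Phi1 (Suc n) x) (Phi1 (Suc n) y) \<le> t * dist x y" for n x y
  proof -
    have "dist (Phi1 (Suc n) x) (Phi1 (Suc n) y) \<le> \<theta> * dist x y"
      using contr1 by simp
    also have "\<dots> \<le> t * dist x y"
      by (simp add: t_def mult_right_mono)
    finally show ?thesis .
  qed
  have closeness: "dist (Phi1 (Suc n) x) (Phi2 (Suc n) x) \<le> C / real (Suc n) powr \<kappa>" for n x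
    using close[rule_format, of "Suc n" x] by simp
  have "\<forall>n \<ge> 1. dist (comp_seq Phi1 n x') (comp_seq Phi2 n x'') \<le> B / real n powr \<kappa>" for x' x''
  proof -
    define d where "d n = dist (comp_seq Phi1 n x') (comp_seq Phi2 n x'')" for n
    have "\<forall>n. d n \<le> K"
      using diam by (simp add: d_def)
    \<comment> \<open>Only the maps Phi1 need to contract.\<close>
    moreover have "\<forall>n \<ge> 1. d (Suc n) \<le> t * d n + C / real (Suc n) powr \<kappa>"
      using dist_perturbed_contraction_le[OF Lipschitz closeness] by (simp add: d_def)
    ultimately have "\<forall>n \<ge> 1. d n \<le> B / real n powr \<kappa>"
      using B by blast
    then show ?thesis
      by (simp add: d_def)
  qed
  then show ?thesis by blast
qed

end
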